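(* Let $\theta^*$ be an optimal solution of the general problem. Then for every pair of jobs $i,j$ there exists a constant $c_{i,j}$ such that $$\frac{s_i'(\theta_i^*(t),t)}{s_j'(\theta_j^*(t),t)}=c_{i,j}$$ for all $t>0$ with $\theta_i^*(t)>0$ and $\theta_j^*(t)>0$.
   Context: General problem. There are $M$ jobs available at time $0$ with sizes $x_i>0$. Let $B(t)>0$ be the total resource available at time $t$, right-continuous in $t$. Each job $i$ has a time-varying speedup function $s_i(\theta,t)$ such that for each fixed $t$: $s_i(0,t)=0$, and $s_i(\cdot,t)$ is strictly increasing, strictly concave and differentiable in $\theta$; the partial derivative $s_i'(\theta,t)=\partial s_i(\theta,t)/\partial\theta$ is continuous in $\theta$; and $s_i$, $s_i'$ are right-continuous in $t$. A schedule consists of nonnegative right-continuous functions $\theta_i(t)$ with $\sum_{i=1}^M\theta_i(t)\le B(t)$ for all $t>0$. The service to job $i$ on $[t_1,t_2]$ is $Q_i(t_1,t_2)=\int_{t_1}^{t_2}s_i(\theta_i(t),t)\,dt$; the completion time $T_i$ satisfies $Q_i(0,T_i)=x_i$, with $\theta_i(t)=0$ for $t>T_i$. The objective is $J=f(T_1,\dots,T_M)$ where $f$ is continuous and strictly increasing in each argument; an optimal solution is a feasible schedule minimizing $J$. *)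

theory Defs
  imports "HOL-Analysis.Analysis"
begin

definition strict_concave_on :: "real set \<Rightarrow> (real \<Rightarrow> real) \<Rightarrow> bool" where
  "strict_concave_on S g \<longleftrightarrow> convex S \<and>
     (\<forall>a\<in>S. \<forall>b\<in>S. a \<noteq> b \<longrightarrow> (\<forall>u. 0 < u \<and> u < 1 \<longrightarrow>
        g (u * a + (1 - u) * b) > u * g a + (1 - u) * g b))"

text \<open>Standing assumptions on the time-varying speedup functions
  (jobs indexed by a finite type 'm, s i th t = speedup of job i with resource th at time t,
  ds i th t = its partial derivative in th).\<close>
definition speedup_ok :: "('m \<Rightarrow> real \<Rightarrow> real \<Rightarrow> real) \<Rightarrow> ('m \<Rightarrow> real \<Rightarrow> real \<Rightarrow> real) \<Rightarrow> bool" where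
  "speedup_ok s ds \<longleftrightarrow> (\<forall>i. \<forall>t\<ge>0.
      s i 0 t = 0 \<and>
      strict_mono_on {0..} (\<lambda>th. s i th t) \<and>
      strict_concave_on {0..} (\<lambda>th. s i th t) \<and>
      (\<forall>th\<ge>0. ((\<lambda>y. s i y t) has_real_derivative ds i th t) (at th within {0..})) \<and>
      continuous_on {0..} (\<lambda>th. ds i th t) \<and>
      (\<forall>th\<ge>0. continuous (at_right t) (\<lambda>u. s i th u) \<and>
                continuous (at_right t) (\<lambda>u. ds i th u)))"

definition service :: "('m \<Rightarrow> real \<Rightarrow> real \<Rightarrow> real) \<Rightarrow> ('m \<Rightarrow> real \<Rightarrow> real) \<Rightarrow> 'm \<Rightarrow> real \<Rightarrow> real \<Rightarrow> real" where
  "service s th i t1 t2 = integral {t1..t2} (\<lambda>t. s i (th i t) t)"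

definition feasible ::
  "(real \<Rightarrow> real) \<Rightarrow> ('m \<Rightarrow> real \<Rightarrow> real \<Rightarrow> real) \<Rightarrow> ('m \<Rightarrow> real) \<Rightarrow>
   ('m::finite \<Rightarrow> real \<Rightarrow> real) \<Rightarrow> real^'m \<Rightarrow> bool" where
  "feasible B s x th T \<longleftrightarrow>
     (\<forall>i. \<forall>t\<ge>0. th i t \<ge> 0 \<and> continuous (at_right t) (th i)) \<and>
     (\<forall>t>0. (\<Sum>i\<in>UNIV. th i t) \<le> B t) \<and>
     (\<forall>i. \<forall>\<tau>\<ge>0. (\<lambda>t. s i (th i t) t) integrable_on {0..\<tau>}) \<and>
     (\<forall>i. T $ i \<ge> 0 \<and> service s th i 0 (T $ i) = x i \<and>
          (\<forall>\<tau>. 0 \<le> \<tau> \<and> \<tau> < T $ i \<longrightarrow> service s th i 0 \<tau> < x i) \<and>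
          (\<forall>t>T $ i. th i t = 0))"

definition optimal ::
  "((real^'m) \<Rightarrow> real) \<Rightarrow> (real \<Rightarrow> real) \<Rightarrow> ('m \<Rightarrow> real \<Rightarrow> real \<Rightarrow> real) \<Rightarrow> ('m \<Rightarrow> real) \<Rightarrow>
   ('m::finite \<Rightarrow> real \<Rightarrow> real) \<Rightarrow> real^'m \<Rightarrow> bool" where
  "optimal f B s x th T \<longleftrightarrow> feasible B s x th T \<and>
     (\<forall>th' T'. feasible B s x th' T' \<longrightarrow> f T \<le> f T')"

end

theory Submission
  imports Defs
begin

text \<open>Suppose the ratio of marginal speedups of jobs \<open>i\<close> and \<open>j\<close> were larger at time \<open>t1\<close> than
  at time \<open>t2\<close>, both jobs being active at both times. Shifting a little resource from \<open>j\<close> to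
  \<open>i\<close> on a short window after \<open>t1\<close>, and from \<open>i\<close> to \<open>j\<close> on an equally short window after
  \<open>t2\<close>, then increases, to first order, the service of both jobs by their completion times.
  Stopping every job once it has received its size gives a feasible schedule in which no job
  finishes later and \<open>i\<close> finishes earlier, contradicting optimality because the objective is
  strictly increasing. Since the speedups are only right-continuous in time, the modified
  schedule runs the two jobs at constant levels on the windows, slightly inside their current
  allocations.\<close>

lemma eventually_at_right_imp_window:
  fixes t :: real
  assumes "eventually P (at_right t)" "P t"
  obtains e where "t < e" "\<And>u. t \<le> u \<Longrightarrow> u < e \<Longrightarrow> P u"
proof -
  obtain e where "t < e" "\<And>u. t < u \<Longrightarrow> u < e \<Longrightarrow> P u"
    using assms(1) unfolding eventually_at_right_field by blast
  then show thesis
    using assms(2) that by (metis order_le_less)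
qed

lemma continuous_at_right_cong:
  fixes g h :: "real \<Rightarrow> real"
  assumes "continuous (at_right t) g" "eventually (\<lambda>u. h u = g u) (at_right t)" "h t = g t"
  shows "continuous (at_right t) h"
  using assms unfolding continuous_within by (simp add: tendsto_cong)

lemma continuous_at_right_zero_after:
  fixes g :: "real \<Rightarrow> real"
  assumes "continuous (at_right t) g" "\<And>u. u > T \<Longrightarrow> g u = 0" "T \<le> t"
  shows "g t = 0"
proof -
  have "eventually (\<lambda>u. g u = 0) (at_right t)"
    using assms(2,3) eventually_at_right_less[of t] by (auto elim: eventually_mono)
  then have "(g \<longlongrightarrow> 0) (at_right t)"
    by (simp add: tendsto_eventually)
  moreover have "(g \<longlongrightarrow> g t) (at_right t)"
    using assms(1) by (simp add: continuous_within)
  ultimately show ?thesis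
    using tendsto_unique[of "at_right t"] by auto
qed

lemma continuous_at_right_dyadic_limit:
  fixes g :: "real \<Rightarrow> real"
  assumes "continuous (at_right t) g"
  shows "(\<lambda>n. g (\<lceil>t * 2^n\<rceil> / 2^n)) \<longlonglongrightarrow> g t"
proof -
  define r :: "nat \<Rightarrow> real" where "r n = \<lceil>t * 2^n\<rceil> / 2^n" for n
  have r_ge: "t \<le> r n" for n
    unfolding r_def by (simp add: le_divide_eq)
  have r_less: "r n < t + 1 / 2^n" for n
  proof -
    have "real_of_int \<lceil>t * 2^n\<rceil> < t * 2^n + 1" by linarith
    then show ?thesis unfolding r_def by (simp add: divide_less_eq distrib_right)
  qed
  have upper: "(\<lambda>n. t + 1 / 2^n :: real) \<longlonglongrightarrow> t"
    using tendsto_add[OF tendsto_const LIMSEQ_divide_realpow_zero[of 2 1], of t] by simp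
  have "r \<longlonglongrightarrow> t"
  proof (rule real_tendsto_sandwich[OF _ _ tendsto_const upper])
    show "eventually (\<lambda>n. t \<le> r n) sequentially" using r_ge by simp
    show "eventually (\<lambda>n. r n \<le> t + 1 / 2^n) sequentially" using r_less by (simp add: less_imp_le)
  qed
  moreover have "r n \<in> {t..t+1}" for n
  proof -
    have "1 / 2^n \<le> (1::real)" by simp
    then have "r n \<le> t + 1" using r_less[of n] by linarith
    then show ?thesis using r_ge[of n] by simp
  qed
  moreover have "continuous (at t within {t..t+1}) g"
    using assms by (simp add: at_within_Icc_at_right)
  ultimately have "(g \<circ> r) \<longlonglongrightarrow> g t"
    unfolding continuous_within_sequentially by blast
  then show ?thesis by (simp add: r_def comp_def)
qed

lemma continuous_at_right_imp_measurable:
  fixes g :: "real \<Rightarrow> real"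
  assumes "\<And>t. t \<in> S \<Longrightarrow> continuous (at_right t) g"
  shows "g \<in> borel_measurable (lebesgue_on S)"
proof (rule borel_measurable_LIMSEQ_real)
  fix t assume "t \<in> space (lebesgue_on S)"
  then show "(\<lambda>n. g (\<lceil>t * 2^n\<rceil> / 2^n)) \<longlonglongrightarrow> g t"
    using assms continuous_at_right_dyadic_limit by auto
next
  fix n :: nat
  have "(\<lambda>t::real. \<lceil>t * 2^n\<rceil>) \<in> measurable borel (count_space UNIV)"
    by measurable
  then have "(\<lambda>t::real. g (\<lceil>t * 2^n\<rceil> / 2^n)) \<in> borel_measurable borel"
    by (rule measurable_compose_countable'[where I=UNIV, rotated]) auto
  then show "(\<lambda>t. g (\<lceil>t * 2^n\<rceil> / 2^n)) \<in> borel_measurable (lebesgue_on S)"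
    by (intro measurable_restrict_space1 measurable_completion) simp
qed

lemma continuous_at_right_bounded_integrable:
  fixes g :: "real \<Rightarrow> real"
  assumes "\<And>t. t \<in> {c..d} \<Longrightarrow> continuous (at_right t) g" "\<And>t. t \<in> {c..d} \<Longrightarrow> \<bar>g t\<bar> \<le> M"
  shows "g integrable_on {c..d}"
  by (rule measurable_bounded_by_integrable_imp_integrable_real
      [OF continuous_at_right_imp_measurable[OF assms(1)] _ assms(2)]) auto

definition patch :: "real \<Rightarrow> real \<Rightarrow> (real \<Rightarrow> 'a) \<Rightarrow> (real \<Rightarrow> 'a) \<Rightarrow> real \<Rightarrow> 'a" where
  "patch c d h g u = (if u \<in> {c..<d} then h u else g u)"

lemma patch_comp: "(\<lambda>u. F (patch c d h g u) u) = patch c d (\<lambda>u. F (h u) u) (\<lambda>u. F (g u) u)"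
  by (auto simp: patch_def)

lemma patch_outside [simp]: "u \<notin> {c..<d} \<Longrightarrow> patch c d h g u = g u"
  unfolding patch_def by presburger

lemma continuous_at_right_patch:
  fixes g h :: "real \<Rightarrow> real"
  assumes h: "continuous (at_right t) h" and g: "continuous (at_right t) g"
  shows "continuous (at_right t) (patch c d h g)"
proof (cases "t \<in> {c..<d}")
  case True
  have "eventually (\<lambda>u. u < d) (at_right t)"
    using True by (auto simp: eventually_at_right_field)
  with eventually_at_right_less[of t]
  have "eventually (\<lambda>u. patch c d h g u = h u) (at_right t)"
    by eventually_elim (use True in \<open>auto simp: patch_def\<close>)
  then show ?thesis
    using True by (intro continuous_at_right_cong[OF h]) (auto simp: patch_def)
next
  case False
  have "eventually (\<lambda>u. u < c \<or> d \<le> u) (at_right t)"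
  proof (cases "t < c")
    case True then show ?thesis by (auto simp: eventually_at_right_field)
  next
    case False
    then show ?thesis
      using \<open>t \<notin> {c..<d}\<close> eventually_at_right_less[of t] by (auto elim: eventually_mono)
  qed
  then have "eventually (\<lambda>u. patch c d h g u = g u) (at_right t)"
    by eventually_elim (auto simp: patch_def)
  then show ?thesis
    using False by (intro continuous_at_right_cong[OF g]) auto
qed

lemma
  fixes P g :: "real \<Rightarrow> real"
  assumes P: "P integrable_on {c..d}" and g: "g integrable_on {a..b}"
    and "a \<le> c" "c \<le> d" "d \<le> b"
  shows integrable_patch: "patch c d P g integrable_on {a..b}"
    and integral_patch: "integral {a..b} (patch c d P g) = integral {a..b} g + integral {c..d} (\<lambda>u. P u - g u)"
proof -
  have "g integrable_on {c..d}"
    by (rule integrable_on_subinterval[OF g]) (use assms in auto)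
  then have "(\<lambda>u. P u - g u) integrable_on {c..d}"
    by (rule integrable_diff[OF P])
  define R where "R u = (if u \<in> {c..d} then P u - g u else 0)" for u
  have "R integrable_on UNIV"
    unfolding R_def Henstock_Kurzweil_Integration.integrable_restrict_UNIV by fact
  then have R: "R integrable_on {a..b}"
    by (rule integrable_on_subinterval) simp
  have spike: "patch c d P g u = g u + R u" if "u \<in> {a..b} - {d}" for u
    using that by (auto simp: patch_def R_def)
  show "patch c d P g integrable_on {a..b}"
    by (rule integrable_spike[OF integrable_add[OF g R] negligible_sing spike])
  have "integral {a..b} (patch c d P g) = integral {a..b} (\<lambda>u. g u + R u)"
    by (rule integral_spike[of "{d}"]) (use spike in auto)
  also have "\<dots> = integral {a..b} g + integral {a..b} R"
    by (rule integral_add[OF g R])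
  also have "integral {a..b} R = integral ({c..d} \<inter> {a..b}) (\<lambda>u. P u - g u)"
    unfolding R_def by (rule Henstock_Kurzweil_Integration.integral_restrict_Int)
  also have "{c..d} \<inter> {a..b} = {c..d}"
    using assms by auto
  finally show "integral {a..b} (patch c d P g) = integral {a..b} g + integral {c..d} (\<lambda>u. P u - g u)" .
qed

lemma integral_ge_const:
  fixes F :: "real \<Rightarrow> real"
  assumes "F integrable_on {c..d}" "c \<le> d" "\<And>u. u \<in> {c..d} \<Longrightarrow> L \<le> F u"
  shows "(d - c) * L \<le> integral {c..d} F"
  using integral_le[OF integrable_const_ivl assms(1)] assms by simp

lemma finite_positive_lower_bound:
  fixes S :: "real set"
  assumes "finite S" "\<And>m. m \<in> S \<Longrightarrow> 0 < m"
  obtains \<delta> where "0 < \<delta>" "\<And>m. m \<in> S \<Longrightarrow> \<delta> < m"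
proof (cases "S = {}")
  case False
  then have "0 < Min S"
    using assms by (simp add: Min_gr_iff)
  then show thesis
    using that[of "Min S / 2"] Min_le[OF assms(1)] by fastforce
qed (use that[of 1] in simp)

lemma difference_quotient_along_lines:
  fixes g :: "real \<Rightarrow> real"
  assumes "(g has_real_derivative D) (at a)"
  shows "((\<lambda>h. (g (a + p * h) - g (a + q * h)) / h) \<longlongrightarrow> (p - q) * D) (at 0)"
proof -
  have line: "((\<lambda>h. g (a + r * h)) has_real_derivative r * D) (at 0)" for r
  proof -
    have "((\<lambda>h. a + r * h) has_real_derivative r) (at 0)"
      by (auto intro!: derivative_eq_intros)
    moreover have "(g has_real_derivative D) (at (a + r * 0))"
      using assms by simp
    ultimately show ?thesis
      using DERIV_chain2 by (metis mult.commute)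
  qed
  have "((\<lambda>h. g (a + p * h) - g (a + q * h)) has_real_derivative p * D - q * D) (at 0)"
    by (intro DERIV_diff line)
  then show ?thesis
    by (simp add: has_field_derivative_iff left_diff_distrib)
qed

lemma deriv_pos_if_strict_mono_concave:
  fixes g :: "real \<Rightarrow> real"
  assumes mono: "strict_mono_on {0..} g" and concave: "strict_concave_on {0..} g"
    and deriv: "(g has_real_derivative D) (at \<theta> within {0..})" and "0 \<le> \<theta>"
  shows "0 < D"
proof -
  have "((\<lambda>y. (g y - g \<theta>) / (y - \<theta>)) \<longlongrightarrow> D) (at_right \<theta>)"
    using deriv \<open>0 \<le> \<theta>\<close> unfolding has_field_derivative_iff
    by (auto elim!: tendsto_within_subset)
  moreover have "eventually (\<lambda>y. g (\<theta> + 1) - g \<theta> \<le> (g y - g \<theta>) / (y - \<theta>)) (at_right \<theta>)"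
    unfolding eventually_at_right_field
  proof (intro exI[of _ "\<theta> + 1"] conjI allI impI)
    fix y assume y: "\<theta> < y" "y < \<theta> + 1"
    define u where "u = y - \<theta>"
    have "u * g (\<theta> + 1) + (1 - u) * g \<theta> < g (u * (\<theta> + 1) + (1 - u) * \<theta>)"
      using concave y \<open>0 \<le> \<theta>\<close> unfolding strict_concave_on_def u_def by auto
    also have "u * (\<theta> + 1) + (1 - u) * \<theta> = y"
      by (simp add: u_def algebra_simps)
    finally have "u * (g (\<theta> + 1) - g \<theta>) < g y - g \<theta>"
      by (simp add: algebra_simps)
    then show "g (\<theta> + 1) - g \<theta> \<le> (g y - g \<theta>) / (y - \<theta>)"
      using y by (simp add: u_def pos_le_divide_eq mult.commute)
  qed simp
  ultimately have "g (\<theta> + 1) - g \<theta> \<le> D"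
    by (intro tendsto_lowerbound) auto
  moreover have "g \<theta> < g (\<theta> + 1)"
    using mono \<open>0 \<le> \<theta>\<close> by (intro strict_mono_onD[OF mono]) auto
  ultimately show ?thesis by simp
qed

lemma exchange_proportions:
  fixes \<alpha>1 \<alpha>2 \<beta>1 \<beta>2 :: real
  assumes pos: "0 < \<alpha>2" "0 < \<beta>1" "0 < \<beta>2" and gap: "\<alpha>2 * \<beta>1 < \<alpha>1 * \<beta>2"
  obtains \<rho> \<eta> where "0 < \<rho>" "0 < \<eta>" "\<alpha>2 * (\<rho> + 4 * \<eta>) < \<alpha>1" "\<beta>1 * (1 + 4 * \<eta>) < \<rho> * \<beta>2"
proof -
  have "\<beta>1 / \<beta>2 < \<alpha>1 / \<alpha>2"
    using pos gap by (simp add: divide_less_eq field_simps)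
  then obtain \<rho> where \<rho>: "\<beta>1 / \<beta>2 < \<rho>" "\<rho> < \<alpha>1 / \<alpha>2"
    using dense by blast
  then have \<rho>_i: "\<alpha>2 * \<rho> < \<alpha>1" and \<rho>_j: "\<beta>1 < \<rho> * \<beta>2"
    using pos by (simp_all add: field_simps)
  have "0 < \<rho>"
    using \<rho>(1) pos by (smt (verit) divide_pos_pos)
  have "((\<lambda>\<eta>. \<alpha>2 * (\<rho> + 4 * \<eta>)) \<longlongrightarrow> \<alpha>2 * (\<rho> + 4 * 0)) (at_right 0)"
    "((\<lambda>\<eta>. \<beta>1 * (1 + 4 * \<eta>)) \<longlongrightarrow> \<beta>1 * (1 + 4 * 0)) (at_right 0)"
    by (intro tendsto_intros)+
  then have "eventually (\<lambda>\<eta>. 0 < \<eta> \<and> \<alpha>2 * (\<rho> + 4 * \<eta>) < \<alpha>1 \<and> \<beta>1 * (1 + 4 * \<eta>) < \<rho> * \<beta>2) (at_right 0)"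
    using \<rho>_i \<rho>_j by (intro eventually_conj eventually_at_right_less) (auto intro: order_tendstoD)
  then show thesis
    using that \<open>0 < \<rho>\<close> eventually_happens'[OF trivial_limit_at_right_real] by blast
qed

lemma eventually_increment_less:
  fixes g1 g2 :: "real \<Rightarrow> real"
  assumes g1: "(g1 has_real_derivative \<alpha>1) (at a1)" and g2: "(g2 has_real_derivative \<alpha>2) (at a2)"
    and less: "(p2 - q2) * \<alpha>2 < (p1 - q1) * \<alpha>1"
  shows "eventually (\<lambda>h. g2 (a2 + p2 * h) - g2 (a2 + q2 * h) < g1 (a1 + p1 * h) - g1 (a1 + q1 * h))
    (at_right 0)"
proof -
  have "((\<lambda>h. (g1 (a1 + p1 * h) - g1 (a1 + q1 * h)) / h - (g2 (a2 + p2 * h) - g2 (a2 + q2 * h)) / h)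
      \<longlongrightarrow> (p1 - q1) * \<alpha>1 - (p2 - q2) * \<alpha>2) (at_right 0)"
    by (intro tendsto_diff tendsto_within_subset[OF difference_quotient_along_lines] g1 g2 subset_UNIV)
  then have "eventually (\<lambda>h. 0 < (g1 (a1 + p1 * h) - g1 (a1 + q1 * h)) / h
      - (g2 (a2 + p2 * h) - g2 (a2 + q2 * h)) / h) (at_right 0)"
    using less by (intro order_tendstoD(1)) auto
  with eventually_at_right_less[of 0] show ?thesis
    by eventually_elim (simp add: diff_divide_distrib[symmetric] zero_less_divide_iff)
qed

lemma exchange_increments:
  fixes g1 g2 h1 h2 :: "real \<Rightarrow> real"
  assumes g1: "(g1 has_real_derivative \<alpha>1) (at a1)" and g2: "(g2 has_real_derivative \<alpha>2) (at a2)"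
    and h1: "(h1 has_real_derivative \<beta>1) (at b1)" and h2: "(h2 has_real_derivative \<beta>2) (at b2)"
    and pos: "0 < a2" "0 < b1" "0 < \<alpha>2" "0 < \<beta>1" "0 < \<beta>2"
    and gap: "\<alpha>2 * \<beta>1 < \<alpha>1 * \<beta>2"
  obtains \<gamma> \<Delta>1 \<Delta>2 where "0 < \<gamma>" "0 < \<Delta>1" "0 < \<Delta>2" "0 \<le> b1 - 3 * \<gamma> - \<Delta>1" "0 \<le> a2 - 3 * \<gamma> - \<Delta>2"
    "g2 (a2 + \<gamma>) - g2 (a2 - 3 * \<gamma> - \<Delta>2) < g1 (a1 + \<gamma> + \<Delta>1) - g1 (a1 + \<gamma>)"
    "h1 (b1 + \<gamma>) - h1 (b1 - 3 * \<gamma> - \<Delta>1) < h2 (b2 + \<gamma> + \<Delta>2) - h2 (b2 + \<gamma>)"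
proof -
  obtain \<rho> \<eta> where \<rho>: "0 < \<rho>" and \<eta>: "0 < \<eta>" "\<alpha>2 * (\<rho> + 4 * \<eta>) < \<alpha>1" "\<beta>1 * (1 + 4 * \<eta>) < \<rho> * \<beta>2"
    using exchange_proportions[OF pos(3-5) gap] by blast
  txt \<open>Take \<open>\<gamma> = \<eta> h\<close>, \<open>\<Delta>1 = h\<close> and \<open>\<Delta>2 = \<rho> h\<close> for small \<open>h > 0\<close>.\<close>
  have slopes: "(\<eta> - (- 3 * \<eta> - \<rho>)) * \<alpha>2 < ((\<eta> + 1) - \<eta>) * \<alpha>1"
    "(\<eta> - (- 3 * \<eta> - 1)) * \<beta>1 < ((\<eta> + \<rho>) - \<eta>) * \<beta>2"
    using \<eta> by (simp_all add: algebra_simps)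
  have line: "((\<lambda>h. c - r * h) \<longlongrightarrow> c - r * 0) (at_right 0)" for c r :: real
    by (intro tendsto_intros)
  have "eventually (\<lambda>h. 0 < h
      \<and> g2 (a2 + \<eta> * h) - g2 (a2 + (- 3 * \<eta> - \<rho>) * h) < g1 (a1 + (\<eta> + 1) * h) - g1 (a1 + \<eta> * h)
      \<and> h1 (b1 + \<eta> * h) - h1 (b1 + (- 3 * \<eta> - 1) * h) < h2 (b2 + (\<eta> + \<rho>) * h) - h2 (b2 + \<eta> * h)
      \<and> 0 < b1 - (3 * \<eta> + 1) * h \<and> 0 < a2 - (3 * \<eta> + \<rho>) * h) (at_right 0)"
    using pos by (intro eventually_conj eventually_at_right_less eventually_increment_less[OF g1 g2 slopes(1)]
        eventually_increment_less[OF h2 h1 slopes(2)] order_tendstoD(1)[OF line]) auto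
  then obtain h where h: "0 < h"
    "g2 (a2 + \<eta> * h) - g2 (a2 + (- 3 * \<eta> - \<rho>) * h) < g1 (a1 + (\<eta> + 1) * h) - g1 (a1 + \<eta> * h)"
    "h1 (b1 + \<eta> * h) - h1 (b1 + (- 3 * \<eta> - 1) * h) < h2 (b2 + (\<eta> + \<rho>) * h) - h2 (b2 + \<eta> * h)"
    "0 < b1 - (3 * \<eta> + 1) * h" "0 < a2 - (3 * \<eta> + \<rho>) * h"
    using eventually_happens'[OF trivial_limit_at_right_real] by blast
  show thesis
  proof (rule that[of "\<eta> * h" h "\<rho> * h"])
    show "0 < \<eta> * h" "0 < h" "0 < \<rho> * h"
      using \<eta> h \<rho> by simp_all
    show "0 \<le> b1 - 3 * (\<eta> * h) - h" "0 \<le> a2 - 3 * (\<eta> * h) - \<rho> * h"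
      using h by (simp_all add: algebra_simps)
    show "g2 (a2 + \<eta> * h) - g2 (a2 - 3 * (\<eta> * h) - \<rho> * h) < g1 (a1 + \<eta> * h + h) - g1 (a1 + \<eta> * h)"
      using h(2) by (simp add: algebra_simps)
    show "h1 (b1 + \<eta> * h) - h1 (b1 - 3 * (\<eta> * h) - h) < h2 (b2 + \<eta> * h + \<rho> * h) - h2 (b2 + \<eta> * h)"
      using h(3) by (simp add: algebra_simps)
  qed
qed

lemma
  assumes "speedup_ok s ds" "0 \<le> t"
  shows speedup_zero: "s k 0 t = 0"
    and speedup_mono: "0 \<le> p \<Longrightarrow> p \<le> q \<Longrightarrow> s k p t \<le> s k q t"
    and speedup_continuous_at_right: "0 \<le> \<theta> \<Longrightarrow> continuous (at_right t) (\<lambda>u. s k \<theta> u)"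
    and speedup_deriv_pos: "0 \<le> \<theta> \<Longrightarrow> 0 < ds k \<theta> t"
    and speedup_has_derivative_at: "0 < \<theta> \<Longrightarrow> ((\<lambda>y. s k y t) has_real_derivative ds k \<theta> t) (at \<theta>)"
proof -
  have mono: "strict_mono_on {0..} (\<lambda>y. s k y t)"
    and concave: "strict_concave_on {0..} (\<lambda>y. s k y t)"
    and deriv: "\<And>\<theta>. 0 \<le> \<theta> \<Longrightarrow> ((\<lambda>y. s k y t) has_real_derivative ds k \<theta> t) (at \<theta> within {0..})"
    using assms unfolding speedup_ok_def by auto
  show "s k 0 t = 0" "0 \<le> \<theta> \<Longrightarrow> continuous (at_right t) (\<lambda>u. s k \<theta> u)"
    using assms unfolding speedup_ok_def by auto
  show "0 \<le> p \<Longrightarrow> p \<le> q \<Longrightarrow> s k p t \<le> s k q t"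
    using strict_mono_on_leD[OF mono] by auto
  show "0 \<le> \<theta> \<Longrightarrow> 0 < ds k \<theta> t"
    by (rule deriv_pos_if_strict_mono_concave[OF mono concave deriv])
  assume "0 < \<theta>"
  then have "((\<lambda>y. s k y t) has_real_derivative ds k \<theta> t) (at \<theta> within {0<..})"
    by (intro has_field_derivative_subset[OF deriv]) auto
  moreover have "at \<theta> within {0<..} = at \<theta>"
    using \<open>0 < \<theta>\<close> by (intro at_within_open) auto
  ultimately show "((\<lambda>y. s k y t) has_real_derivative ds k \<theta> t) (at \<theta>)"
    by simp
qed

lemma first_hitting_time:
  fixes F :: "real \<Rightarrow> real"
  assumes cont: "continuous_on {0..T} F" and "0 \<le> T" "F 0 = 0" "0 < x" "x \<le> F T"
  obtains \<tau> where "0 \<le> \<tau>" "\<tau> \<le> T" "F \<tau> = x" "\<And>\<sigma>. 0 \<le> \<sigma> \<Longrightarrow> \<sigma> < \<tau> \<Longrightarrow> F \<sigma> < x"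
    "x < F T \<Longrightarrow> \<tau> < T"
proof -
  define S where "S = {0..T} \<inter> F -` {x..}"
  have "closed S"
    unfolding S_def by (rule continuous_closed_preimage[OF cont]) auto
  moreover have "T \<in> S"
    using assms \<open>0 \<le> T\<close> by (simp add: S_def)
  moreover have "bdd_below S"
    by (auto simp: S_def bdd_below_def)
  ultimately have "Inf S \<in> S"
    by (intro closed_contains_Inf) auto
  then have range: "0 \<le> Inf S" "Inf S \<le> T" "x \<le> F (Inf S)"
    by (auto simp: S_def)
  have below: "F \<sigma> < x" if "0 \<le> \<sigma>" "\<sigma> < Inf S" for \<sigma>
    using that range cInf_lower[OF _ \<open>bdd_below S\<close>, of \<sigma>] by (force simp: S_def)
  obtain \<sigma> where \<sigma>: "0 \<le> \<sigma>" "\<sigma> \<le> Inf S" "F \<sigma> = x"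
    using IVT'[of F 0 x "Inf S"] range assms continuous_on_subset[OF cont] by auto
  then have "\<sigma> = Inf S"
    using below[of \<sigma>] by force
  show thesis
  proof (rule that[OF range(1,2)])
    show "F (Inf S) = x" using \<sigma> \<open>\<sigma> = Inf S\<close> by simp
    show "\<And>\<sigma>. 0 \<le> \<sigma> \<Longrightarrow> \<sigma> < Inf S \<Longrightarrow> F \<sigma> < x" by (rule below)
    show "x < F T \<Longrightarrow> Inf S < T" using \<sigma> \<open>\<sigma> = Inf S\<close> range(2) by (cases "Inf S = T") auto
  qed
qed

lemma coordinatewise_mono_le:
  fixes f :: "real^'m::finite \<Rightarrow> real"
  assumes f_mono: "\<And>U i a. a > U $ i \<Longrightarrow> f U < f (\<chi> k. if k = i then a else U $ k)"
    and le: "\<And>k. U $ k \<le> V $ k"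
  shows "f U \<le> f V"
proof -
  define W where "W S = (\<chi> k. if k \<in> S then V $ k else U $ k)" for S
  have "f U \<le> f (W S)" if "finite S" for S
    using that
  proof (induction S rule: finite_induct)
    case empty
    then show ?case by (simp add: W_def)
  next
    case (insert a S)
    have W_insert: "W (insert a S) = (\<chi> k. if k = a then V $ a else W S $ k)"
      by (simp add: W_def vec_eq_iff)
    show ?case
    proof (cases "W S $ a < V $ a")
      case True
      then have "f (W S) < f (W (insert a S))"
        unfolding W_insert by (rule f_mono)
      then show ?thesis using insert by simp
    next
      case False
      then have "W (insert a S) = W S"
        using le[of a] insert(2) by (auto simp: W_insert W_def vec_eq_iff)
      then show ?thesis using insert by simp
    qed
  qed
  from this[of UNIV] show ?thesis
    by (simp add: W_def)
qed

lemma coordinatewise_mono_less: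
  fixes f :: "real^'m::finite \<Rightarrow> real"
  assumes f_mono: "\<And>U i a. a > U $ i \<Longrightarrow> f U < f (\<chi> k. if k = i then a else U $ k)"
    and "\<And>k. U $ k \<le> V $ k" "U $ i < V $ i"
  shows "f U < f V"
proof -
  have "f U < f (\<chi> k. if k = i then V $ i else U $ k)"
    using \<open>U $ i < V $ i\<close> by (rule f_mono)
  also have "\<dots> \<le> f V"
    by (rule coordinatewise_mono_le[where f=f, OF f_mono]) (use assms(2) in auto)
  finally show ?thesis .
qed

definition admissible ::
  "(real \<Rightarrow> real) \<Rightarrow> ('m \<Rightarrow> real \<Rightarrow> real \<Rightarrow> real) \<Rightarrow> ('m::finite \<Rightarrow> real \<Rightarrow> real) \<Rightarrow> bool" where
  "admissible B s \<phi> \<longleftrightarrow>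
     (\<forall>k. \<forall>t\<ge>0. 0 \<le> \<phi> k t \<and> continuous (at_right t) (\<phi> k)) \<and>
     (\<forall>t>0. (\<Sum>k\<in>UNIV. \<phi> k t) \<le> B t) \<and>
     (\<forall>k. \<forall>\<tau>\<ge>0. (\<lambda>t. s k (\<phi> k t) t) integrable_on {0..\<tau>})"

lemma feasible_iff_admissible:
  "feasible B s x \<phi> T \<longleftrightarrow> admissible B s \<phi> \<and>
     (\<forall>i. 0 \<le> T $ i \<and> service s \<phi> i 0 (T $ i) = x i \<and>
          (\<forall>\<tau>. 0 \<le> \<tau> \<and> \<tau> < T $ i \<longrightarrow> service s \<phi> i 0 \<tau> < x i) \<and> (\<forall>t>T $ i. \<phi> i t = 0))"
  unfolding feasible_def admissible_def by blast

lemma admissibleD: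
  assumes "admissible B s \<phi>"
  shows admissible_nonneg: "0 \<le> t \<Longrightarrow> 0 \<le> \<phi> k t"
    and admissible_continuous_at_right: "0 \<le> t \<Longrightarrow> continuous (at_right t) (\<phi> k)"
    and admissible_budget: "0 < t \<Longrightarrow> (\<Sum>k\<in>UNIV. \<phi> k t) \<le> B t"
    and admissible_integrable: "0 \<le> \<tau> \<Longrightarrow> (\<lambda>t. s k (\<phi> k t) t) integrable_on {0..\<tau>}"
  using assms unfolding admissible_def by auto

lemma feasible_active_before_completion:
  assumes "feasible B s x \<phi> T" "0 \<le> t" "0 < \<phi> k t"
  shows "t < T $ k"
proof (rule ccontr)
  assume "\<not> t < T $ k"
  moreover have "admissible B s \<phi>" "\<forall>u>T $ k. \<phi> k u = 0"
    using assms(1) unfolding feasible_iff_admissible by blast+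
  ultimately have "\<phi> k t = 0"
    using admissible_continuous_at_right[OF _ assms(2)] continuous_at_right_zero_after
    by (metis not_less)
  then show False
    using assms(3) by simp
qed

lemma
  assumes adm: "admissible B s \<phi>" and "0 \<le> \<sigma>" "\<sigma> \<le> \<tau> k"
  shows integrable_truncate: "(\<lambda>u. s k (patch 0 (\<tau> k) (\<phi> k) (\<lambda>_. 0) u) u) integrable_on {0..\<sigma>}"
    and service_truncate: "service s (\<lambda>k. patch 0 (\<tau> k) (\<phi> k) (\<lambda>_. 0)) k 0 \<sigma> = service s \<phi> k 0 \<sigma>"
proof -
  have spike: "s k (patch 0 (\<tau> k) (\<phi> k) (\<lambda>_. 0) u) u = s k (\<phi> k u) u" if "u \<in> {0..\<sigma>} - {\<tau> k}" for u
    using that \<open>\<sigma> \<le> \<tau> k\<close> by (auto simp: patch_def)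
  show "(\<lambda>u. s k (patch 0 (\<tau> k) (\<phi> k) (\<lambda>_. 0) u) u) integrable_on {0..\<sigma>}"
    by (rule integrable_spike[OF admissible_integrable[OF adm \<open>0 \<le> \<sigma>\<close>] negligible_sing spike])
  show "service s (\<lambda>k. patch 0 (\<tau> k) (\<phi> k) (\<lambda>_. 0)) k 0 \<sigma> = service s \<phi> k 0 \<sigma>"
    unfolding service_def by (rule integral_spike[OF negligible_sing spike[symmetric]])
qed

lemma admissible_truncate:
  assumes adm: "admissible B s \<phi>" and zero: "\<And>k t. 0 \<le> t \<Longrightarrow> s k 0 t = 0" and "\<And>k. 0 \<le> \<tau> k"
  shows "admissible B s (\<lambda>k. patch 0 (\<tau> k) (\<phi> k) (\<lambda>_. 0))"
  unfolding admissible_def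
proof (intro conjI allI impI)
  fix k and t :: real assume "0 \<le> t"
  show "0 \<le> patch 0 (\<tau> k) (\<phi> k) (\<lambda>_. 0) t"
    using admissible_nonneg[OF adm \<open>0 \<le> t\<close>] by (simp add: patch_def)
  show "continuous (at_right t) (patch 0 (\<tau> k) (\<phi> k) (\<lambda>_. 0))"
    by (intro continuous_at_right_patch admissible_continuous_at_right[OF adm \<open>0 \<le> t\<close>] continuous_const)
next
  fix t :: real assume "0 < t"
  have "(\<Sum>k\<in>UNIV. patch 0 (\<tau> k) (\<phi> k) (\<lambda>_. 0) t) \<le> (\<Sum>k\<in>UNIV. \<phi> k t)"
    using admissible_nonneg[OF adm] \<open>0 < t\<close> by (intro sum_mono) (simp add: patch_def)
  then show "(\<Sum>k\<in>UNIV. patch 0 (\<tau> k) (\<phi> k) (\<lambda>_. 0) t) \<le> B t"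
    using admissible_budget[OF adm \<open>0 < t\<close>] by simp
next
  fix k and \<sigma> :: real assume "0 \<le> \<sigma>"
  show "(\<lambda>u. s k (patch 0 (\<tau> k) (\<phi> k) (\<lambda>_. 0) u) u) integrable_on {0..\<sigma>}"
  proof (cases "\<sigma> \<le> \<tau> k")
    case False
    have "patch 0 (\<tau> k) (\<lambda>u. s k (\<phi> k u) u) (\<lambda>_. 0) integrable_on {0..\<sigma>}"
      using False assms(3)[of k] by (intro integrable_patch admissible_integrable[OF adm]) auto
    then show ?thesis
      by (rule integrable_eq) (use zero in \<open>simp add: patch_def\<close>)
  qed (use integrable_truncate[OF adm \<open>0 \<le> \<sigma>\<close>] in auto)
qed

text \<open>Stop every job at the first time its service reaches its size.\<close>

lemma admissible_imp_feasible:
  assumes adm: "admissible B s \<phi>" and zero: "\<And>k t. 0 \<le> t \<Longrightarrow> s k 0 t = 0"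
    and x_pos: "\<And>k. 0 < x k" and T_nonneg: "\<And>k. 0 \<le> T $ k"
    and served: "\<And>k. x k \<le> service s \<phi> k 0 (T $ k)"
  obtains \<phi>' T' where "feasible B s x \<phi>' T'" "\<And>k. T' $ k \<le> T $ k"
    "\<And>k. x k < service s \<phi> k 0 (T $ k) \<Longrightarrow> T' $ k < T $ k"
proof -
  have "\<exists>\<tau>. 0 \<le> \<tau> \<and> \<tau> \<le> T $ k \<and> service s \<phi> k 0 \<tau> = x k \<and>
      (\<forall>\<sigma>. 0 \<le> \<sigma> \<and> \<sigma> < \<tau> \<longrightarrow> service s \<phi> k 0 \<sigma> < x k) \<and>
      (x k < service s \<phi> k 0 (T $ k) \<longrightarrow> \<tau> < T $ k)" for k
  proof -
    have "continuous_on {0..T $ k} (\<lambda>\<tau>. service s \<phi> k 0 \<tau>)"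
      unfolding service_def
      by (rule indefinite_integral_continuous_1[OF admissible_integrable[OF adm T_nonneg]])
    then obtain \<tau> where "0 \<le> \<tau>" "\<tau> \<le> T $ k" "service s \<phi> k 0 \<tau> = x k"
      "\<And>\<sigma>. 0 \<le> \<sigma> \<Longrightarrow> \<sigma> < \<tau> \<Longrightarrow> service s \<phi> k 0 \<sigma> < x k"
      "x k < service s \<phi> k 0 (T $ k) \<Longrightarrow> \<tau> < T $ k"
      by (rule first_hitting_time[where F="\<lambda>\<tau>. service s \<phi> k 0 \<tau>" and T="T $ k" and x="x k"])
        (use T_nonneg x_pos served in \<open>auto simp: service_def\<close>)
    then show ?thesis by blast
  qed
  then obtain \<tau> where \<tau>: "\<And>k. 0 \<le> \<tau> k \<and> \<tau> k \<le> T $ k \<and> service s \<phi> k 0 (\<tau> k) = x k \<and>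
      (\<forall>\<sigma>. 0 \<le> \<sigma> \<and> \<sigma> < \<tau> k \<longrightarrow> service s \<phi> k 0 \<sigma> < x k) \<and>
      (x k < service s \<phi> k 0 (T $ k) \<longrightarrow> \<tau> k < T $ k)"
    by metis
  have "admissible B s (\<lambda>k. patch 0 (\<tau> k) (\<phi> k) (\<lambda>_. 0))"
    using \<tau> by (intro admissible_truncate[OF adm zero]) auto
  then have "feasible B s x (\<lambda>k. patch 0 (\<tau> k) (\<phi> k) (\<lambda>_. 0)) (\<chi> k. \<tau> k)"
    unfolding feasible_iff_admissible using \<tau> service_truncate[OF adm] by (auto simp: patch_def)
  then show thesis
    by (rule that) (use \<tau> in auto)
qed

lemma optimal_imp_no_overservice:
  fixes f :: "real^'m::finite \<Rightarrow> real"
  assumes f_mono: "\<And>U i a. a > U $ i \<Longrightarrow> f U < f (\<chi> k. if k = i then a else U $ k)"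
    and zero: "\<And>k t. 0 \<le> t \<Longrightarrow> s k 0 t = 0" and x_pos: "\<And>k. 0 < x k"
    and opt: "optimal f B s x th T" and adm: "admissible B s \<phi>"
    and served: "\<And>k. x k \<le> service s \<phi> k 0 (T $ k)"
  shows "service s \<phi> i 0 (T $ i) \<le> x i"
proof (rule ccontr)
  assume over: "\<not> service s \<phi> i 0 (T $ i) \<le> x i"
  have "0 \<le> T $ k" for k
    using opt by (simp add: optimal_def feasible_def)
  then obtain \<phi>' T' where feas: "feasible B s x \<phi>' T'" and "\<And>k. T' $ k \<le> T $ k" "T' $ i < T $ i"
    using admissible_imp_feasible[OF adm zero x_pos _ served] over by (metis not_le)
  then have "f T' < f T"
    by (intro coordinatewise_mono_less[where f=f, OF f_mono])
  moreover have "f T \<le> f T'"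
    using opt feas unfolding optimal_def by blast
  ultimately show False by simp
qed

lemma level_change_window:
  assumes speedup: "speedup_ok s ds" and adm: "admissible B s \<phi>"
    and "0 \<le> t" "0 \<le> v" "0 < \<gamma>" "0 < \<kappa>"
  obtains e where "t < e" "\<And>d. d < e \<Longrightarrow> (\<lambda>u. s k v u) integrable_on {t..d}"
    "\<And>u. t \<le> u \<Longrightarrow> u < e \<Longrightarrow> \<bar>\<phi> k u - \<phi> k t\<bar> < \<gamma>"
    "\<And>u. t \<le> u \<Longrightarrow> u < e \<Longrightarrow> s k v t - s k (\<phi> k t + \<gamma>) t - 2 * \<kappa> \<le> s k v u - s k (\<phi> k u) u"
proof -
  define \<theta> where "\<theta> = \<phi> k t"
  have "0 \<le> \<theta>"
    using admissible_nonneg[OF adm \<open>0 \<le> t\<close>] by (simp add: \<theta>_def)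
  have near: "eventually (\<lambda>u. \<bar>g u - g t\<bar> < \<epsilon>) (at_right t)"
    if "continuous (at_right t) g" "0 < \<epsilon>" for g :: "real \<Rightarrow> real" and \<epsilon>
    using tendstoD[OF that(1)[unfolded continuous_within] that(2)] by (simp add: dist_real_def)
  have "eventually (\<lambda>u. \<bar>\<phi> k u - \<theta>\<bar> < \<gamma> \<and> \<bar>s k v u - s k v t\<bar> < \<kappa> \<and>
      \<bar>s k (\<theta> + \<gamma>) u - s k (\<theta> + \<gamma>) t\<bar> < \<kappa>) (at_right t)"
    unfolding \<theta>_def using assms \<open>0 \<le> \<theta>\<close>
    by (intro eventually_conj near admissible_continuous_at_right speedup_continuous_at_right)
      (auto simp: \<theta>_def)
  then obtain e where "t < e" and e: "\<And>u. t \<le> u \<Longrightarrow> u < e \<Longrightarrow> \<bar>\<phi> k u - \<theta>\<bar> < \<gamma> \<and>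
      \<bar>s k v u - s k v t\<bar> < \<kappa> \<and> \<bar>s k (\<theta> + \<gamma>) u - s k (\<theta> + \<gamma>) t\<bar> < \<kappa>"
    by (rule eventually_at_right_imp_window) (use assms in \<open>auto simp: \<theta>_def\<close>)
  show thesis
  proof (rule that[OF \<open>t < e\<close>])
    fix d assume "d < e"
    show "(\<lambda>u. s k v u) integrable_on {t..d}"
    proof (rule continuous_at_right_bounded_integrable)
      fix u assume "u \<in> {t..d}"
      then show "continuous (at_right u) (\<lambda>u. s k v u)" "\<bar>s k v u\<bar> \<le> \<bar>s k v t\<bar> + \<kappa>"
        using e[of u] \<open>d < e\<close> \<open>0 \<le> t\<close> \<open>0 \<le> v\<close> speedup_continuous_at_right[OF speedup] by auto
    qed
  next
    fix u assume u: "t \<le> u" "u < e"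
    then show "\<bar>\<phi> k u - \<phi> k t\<bar> < \<gamma>"
      using e by (simp add: \<theta>_def)
    have "0 \<le> \<phi> k u" "\<phi> k u \<le> \<theta> + \<gamma>"
      using e[OF u] admissible_nonneg[OF adm] u \<open>0 \<le> t\<close> by auto
    then have "s k (\<phi> k u) u \<le> s k (\<theta> + \<gamma>) u"
      using u \<open>0 \<le> t\<close> by (intro speedup_mono[OF speedup]) auto
    then show "s k v t - s k (\<phi> k t + \<gamma>) t - 2 * \<kappa> \<le> s k v u - s k (\<phi> k u) u"
      using e[OF u] unfolding \<theta>_def abs_less_iff by linarith
  qed
qed

definition exchange :: "'m \<Rightarrow> 'm \<Rightarrow> real \<Rightarrow> real \<Rightarrow> real \<Rightarrow> real \<Rightarrow> ('m \<Rightarrow> real \<Rightarrow> real) \<Rightarrow> 'm \<Rightarrow> real \<Rightarrow> real" where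
  "exchange i j c d vi vj \<phi> = \<phi>(i := patch c d (\<lambda>_. vi) (\<phi> i), j := patch c d (\<lambda>_. vj) (\<phi> j))"

lemma exchange_apply:
  assumes "i \<noteq> j"
  shows "exchange i j c d vi vj \<phi> i = patch c d (\<lambda>_. vi) (\<phi> i)"
    and "exchange i j c d vi vj \<phi> j = patch c d (\<lambda>_. vj) (\<phi> j)"
    and "k \<noteq> i \<Longrightarrow> k \<noteq> j \<Longrightarrow> exchange i j c d vi vj \<phi> k = \<phi> k"
  using assms by (auto simp: exchange_def)

lemma exchange_outside: "u \<notin> {c..<d} \<Longrightarrow> exchange i j c d vi vj \<phi> k u = \<phi> k u"
  by (simp add: exchange_def)

definition exchange_window ::
  "('m \<Rightarrow> real \<Rightarrow> real \<Rightarrow> real) \<Rightarrow> ('m \<Rightarrow> real \<Rightarrow> real) \<Rightarrow> 'm \<Rightarrow> 'm \<Rightarrow> real \<Rightarrow> real \<Rightarrow>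
    real \<Rightarrow> real \<Rightarrow> real \<Rightarrow> real \<Rightarrow> bool" where
  "exchange_window s \<phi> i j c d vi vj gi gj \<longleftrightarrow> 0 \<le> c \<and> c \<le> d \<and> 0 \<le> vi \<and> 0 \<le> vj \<and>
     (\<lambda>u. s i vi u) integrable_on {c..d} \<and> (\<lambda>u. s j vj u) integrable_on {c..d} \<and>
     (\<forall>u\<in>{c..d}. vi + vj \<le> \<phi> i u + \<phi> j u \<and>
        gi \<le> s i vi u - s i (\<phi> i u) u \<and> gj \<le> s j vj u - s j (\<phi> j u) u)"

lemma exchange_window_exists:
  assumes speedup: "speedup_ok s ds" and adm: "admissible B s \<phi>"
    and "0 \<le> t" "0 < \<gamma>" "0 < \<kappa>" "0 \<le> vi" "0 \<le> vj" "vi + vj \<le> \<phi> i t + \<phi> j t - 2 * \<gamma>"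
  obtains e where "t < e" "\<And>d. t \<le> d \<Longrightarrow> d < e \<Longrightarrow> exchange_window s \<phi> i j t d vi vj
      (s i vi t - s i (\<phi> i t + \<gamma>) t - 2 * \<kappa>) (s j vj t - s j (\<phi> j t + \<gamma>) t - 2 * \<kappa>)"
proof -
  obtain ei where ei: "t < ei" "\<And>d. d < ei \<Longrightarrow> (\<lambda>u. s i vi u) integrable_on {t..d}"
    "\<And>u. t \<le> u \<Longrightarrow> u < ei \<Longrightarrow> \<bar>\<phi> i u - \<phi> i t\<bar> < \<gamma>"
    "\<And>u. t \<le> u \<Longrightarrow> u < ei \<Longrightarrow> s i vi t - s i (\<phi> i t + \<gamma>) t - 2 * \<kappa> \<le> s i vi u - s i (\<phi> i u) u"
    using level_change_window[OF speedup adm \<open>0 \<le> t\<close> \<open>0 \<le> vi\<close> \<open>0 < \<gamma>\<close> \<open>0 < \<kappa>\<close>, where k=i] by blast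
  obtain ej where ej: "t < ej" "\<And>d. d < ej \<Longrightarrow> (\<lambda>u. s j vj u) integrable_on {t..d}"
    "\<And>u. t \<le> u \<Longrightarrow> u < ej \<Longrightarrow> \<bar>\<phi> j u - \<phi> j t\<bar> < \<gamma>"
    "\<And>u. t \<le> u \<Longrightarrow> u < ej \<Longrightarrow> s j vj t - s j (\<phi> j t + \<gamma>) t - 2 * \<kappa> \<le> s j vj u - s j (\<phi> j u) u"
    using level_change_window[OF speedup adm \<open>0 \<le> t\<close> \<open>0 \<le> vj\<close> \<open>0 < \<gamma>\<close> \<open>0 < \<kappa>\<close>, where k=j] by blast
  show thesis
  proof (rule that[of "min ei ej"])
    fix d assume "t \<le> d" "d < min ei ej"
    then show "exchange_window s \<phi> i j t d vi vj
      (s i vi t - s i (\<phi> i t + \<gamma>) t - 2 * \<kappa>) (s j vj t - s j (\<phi> j t + \<gamma>) t - 2 * \<kappa>)"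
      unfolding exchange_window_def using assms ei ej by (fastforce simp: abs_less_iff)
  qed (use ei ej in auto)
qed

lemma exchange_window_exchange:
  assumes "exchange_window s \<phi> i j c d vi vj gi gj" "{c..d} \<inter> {c'..<d'} = {}"
  shows "exchange_window s (exchange i' j' c' d' vi' vj' \<phi>) i j c d vi vj gi gj"
proof -
  have "exchange i' j' c' d' vi' vj' \<phi> k u = \<phi> k u" if "u \<in> {c..d}" for k u
    using that assms(2) by (blast intro: exchange_outside)
  then show ?thesis
    using assms(1) unfolding exchange_window_def by simp
qed

lemma sum_exchange_le:
  fixes \<phi> :: "'m::finite \<Rightarrow> real \<Rightarrow> real"
  assumes "i \<noteq> j" and "t \<in> {c..<d} \<Longrightarrow> vi + vj \<le> \<phi> i t + \<phi> j t"
  shows "(\<Sum>k\<in>UNIV. exchange i j c d vi vj \<phi> k t) \<le> (\<Sum>k\<in>UNIV. \<phi> k t)"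
proof -
  have split: "(\<Sum>k\<in>UNIV. f k) = f i + f j + (\<Sum>k\<in>UNIV - {i, j}. f k)" for f :: "'m \<Rightarrow> real"
    using sum.subset_diff[of "{i, j}" UNIV f] \<open>i \<noteq> j\<close> by simp
  have "exchange i j c d vi vj \<phi> i t + exchange i j c d vi vj \<phi> j t \<le> \<phi> i t + \<phi> j t"
    using assms(2) by (cases "t \<in> {c..<d}") (auto simp: exchange_apply[OF \<open>i \<noteq> j\<close>] patch_def)
  moreover have "(\<Sum>k\<in>UNIV - {i, j}. exchange i j c d vi vj \<phi> k t) = (\<Sum>k\<in>UNIV - {i, j}. \<phi> k t)"
    by (intro sum.cong) (auto simp: exchange_apply[OF \<open>i \<noteq> j\<close>])
  ultimately show ?thesis
    using split[of "\<lambda>k. exchange i j c d vi vj \<phi> k t"] split[of "\<lambda>k. \<phi> k t"] by linarith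
qed

lemma admissible_exchange:
  fixes \<phi> :: "'m::finite \<Rightarrow> real \<Rightarrow> real"
  assumes adm: "admissible B s \<phi>" and "i \<noteq> j" and win: "exchange_window s \<phi> i j c d vi vj gi gj"
  shows "admissible B s (exchange i j c d vi vj \<phi>)"
proof -
  let ?\<psi> = "exchange i j c d vi vj \<phi>"
  have win': "0 \<le> c" "c \<le> d" "0 \<le> vi" "0 \<le> vj" "(\<lambda>u. s i vi u) integrable_on {c..d}"
    "(\<lambda>u. s j vj u) integrable_on {c..d}" "\<And>u. u \<in> {c..d} \<Longrightarrow> vi + vj \<le> \<phi> i u + \<phi> j u"
    using win unfolding exchange_window_def by auto
  have patched: "(\<exists>v. 0 \<le> v \<and> (\<lambda>u. s k v u) integrable_on {c..d} \<and> ?\<psi> k = patch c d (\<lambda>_. v) (\<phi> k))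
      \<or> ?\<psi> k = \<phi> k" for k
  proof -
    consider "k = i" | "k = j" | "k \<noteq> i" "k \<noteq> j" by blast
    then show ?thesis
      using win' by cases (auto simp: exchange_apply[OF \<open>i \<noteq> j\<close>])
  qed
  show ?thesis
    unfolding admissible_def
  proof (intro conjI allI impI)
    fix k and t :: real assume "0 \<le> t"
    note \<phi>_t = admissible_nonneg[OF adm \<open>0 \<le> t\<close>] admissible_continuous_at_right[OF adm \<open>0 \<le> t\<close>]
    from patched[of k] show "0 \<le> ?\<psi> k t"
      using \<phi>_t by (elim disjE exE conjE) (auto simp: patch_def)
    from patched[of k] show "continuous (at_right t) (?\<psi> k)"
      using \<phi>_t by (elim disjE exE conjE) (auto intro: continuous_at_right_patch)
  next
    fix t :: real assume "0 < t"
    have "(\<Sum>k\<in>UNIV. ?\<psi> k t) \<le> (\<Sum>k\<in>UNIV. \<phi> k t)"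
      using win'(7)[of t] by (intro sum_exchange_le \<open>i \<noteq> j\<close>) auto
    then show "(\<Sum>k\<in>UNIV. ?\<psi> k t) \<le> B t"
      using admissible_budget[OF adm \<open>0 < t\<close>] by linarith
  next
    fix k and \<tau> :: real assume "0 \<le> \<tau>"
    from patched[of k] show "(\<lambda>u. s k (?\<psi> k u) u) integrable_on {0..\<tau>}"
    proof (elim disjE exE conjE)
      fix v assume \<psi>: "?\<psi> k = patch c d (\<lambda>_. v) (\<phi> k)" and "(\<lambda>u. s k v u) integrable_on {c..d}"
      then have "patch c d (\<lambda>u. s k v u) (\<lambda>u. s k (\<phi> k u) u) integrable_on {0..max \<tau> d}"
        using win' by (intro integrable_patch admissible_integrable[OF adm]) auto
      then show ?thesis
        unfolding \<psi> patch_comp by (rule integrable_on_subinterval) auto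
    qed (simp add: admissible_integrable[OF adm \<open>0 \<le> \<tau>\<close>])
  qed
qed

lemma service_exchange:
  assumes adm: "admissible B s \<phi>" and "i \<noteq> j" and win: "exchange_window s \<phi> i j c d vi vj gi gj"
    and "d \<le> \<tau>"
  shows "service s \<phi> i 0 \<tau> + (d - c) * gi \<le> service s (exchange i j c d vi vj \<phi>) i 0 \<tau>"
    and "service s \<phi> j 0 \<tau> + (d - c) * gj \<le> service s (exchange i j c d vi vj \<phi>) j 0 \<tau>"
proof -
  have gain: "service s \<phi> k 0 \<tau> + (d - c) * g \<le> service s (exchange i j c d vi vj \<phi>) k 0 \<tau>"
    if \<psi>: "exchange i j c d vi vj \<phi> k = patch c d (\<lambda>_. v) (\<phi> k)"
      and v: "(\<lambda>u. s k v u) integrable_on {c..d}" and g: "\<And>u. u \<in> {c..d} \<Longrightarrow> g \<le> s k v u - s k (\<phi> k u) u"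
    for k v g
  proof -
    have "0 \<le> c" "c \<le> d"
      using win by (auto simp: exchange_window_def)
    then have int: "(\<lambda>u. s k (\<phi> k u) u) integrable_on {0..\<tau>}" "(\<lambda>u. s k (\<phi> k u) u) integrable_on {c..d}"
      using \<open>d \<le> \<tau>\<close> integrable_on_subinterval[OF admissible_integrable[OF adm, of d k], of c d]
        admissible_integrable[OF adm, of \<tau> k] by auto
    have "(d - c) * g \<le> integral {c..d} (\<lambda>u. s k v u - s k (\<phi> k u) u)"
      by (rule integral_ge_const[OF integrable_diff[OF v int(2)] \<open>c \<le> d\<close> g])
    also have "service s \<phi> k 0 \<tau> + \<dots> = service s (exchange i j c d vi vj \<phi>) k 0 \<tau>"
      unfolding service_def \<psi> patch_comp
      by (rule integral_patch[symmetric, OF v int(1) \<open>0 \<le> c\<close> \<open>c \<le> d\<close> \<open>d \<le> \<tau>\<close>])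
    finally show ?thesis by simp
  qed
  show "service s \<phi> i 0 \<tau> + (d - c) * gi \<le> service s (exchange i j c d vi vj \<phi>) i 0 \<tau>"
    "service s \<phi> j 0 \<tau> + (d - c) * gj \<le> service s (exchange i j c d vi vj \<phi>) j 0 \<tau>"
    using win by (auto intro!: gain simp: exchange_apply[OF \<open>i \<noteq> j\<close>] exchange_window_def)
qed

lemma two_window_exchange:
  fixes \<phi> :: "'m::finite \<Rightarrow> real \<Rightarrow> real"
  assumes adm: "admissible B s \<phi>" and "i \<noteq> j" and "t1 \<noteq> t2"
    and win1: "t1 < e1" "\<And>d. t1 \<le> d \<Longrightarrow> d < e1 \<Longrightarrow> exchange_window s \<phi> i j t1 d A1 C1 gi1 gj1"
    and win2: "t2 < e2" "\<And>d. t2 \<le> d \<Longrightarrow> d < e2 \<Longrightarrow> exchange_window s \<phi> j i t2 d A2 C2 gj2 gi2"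
    and gains: "0 < gi1 + gi2" "0 \<le> gj1 + gj2"
    and before: "t1 < \<tau>i" "t2 < \<tau>i" "t1 < \<tau>j" "t2 < \<tau>j"
  obtains \<psi> where "admissible B s \<psi>" "service s \<phi> i 0 \<tau>i < service s \<psi> i 0 \<tau>i"
    "service s \<phi> j 0 \<tau>j \<le> service s \<psi> j 0 \<tau>j"
    "\<And>k \<tau>. k \<noteq> i \<Longrightarrow> k \<noteq> j \<Longrightarrow> service s \<psi> k 0 \<tau> = service s \<phi> k 0 \<tau>"
proof -
  obtain \<delta> where "0 < \<delta>"
    and below: "\<And>m. m \<in> {e1 - t1, e2 - t2, \<bar>t1 - t2\<bar>, \<tau>i - t1, \<tau>i - t2, \<tau>j - t1, \<tau>j - t2} \<Longrightarrow> \<delta> < m"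
    by (rule finite_positive_lower_bound[where S="{e1 - t1, e2 - t2, \<bar>t1 - t2\<bar>, \<tau>i - t1, \<tau>i - t2, \<tau>j - t1, \<tau>j - t2}"])
      (use win1(1) win2(1) before \<open>t1 \<noteq> t2\<close> in auto)
  then have \<delta>: "0 < \<delta>" "t1 + \<delta> < e1" "t2 + \<delta> < e2" "\<delta> < \<bar>t1 - t2\<bar>"
    "t1 + \<delta> \<le> \<tau>i" "t2 + \<delta> \<le> \<tau>i" "t1 + \<delta> \<le> \<tau>j" "t2 + \<delta> \<le> \<tau>j"
    by (force+)
  have w2: "exchange_window s \<phi> j i t2 (t2 + \<delta>) A2 C2 gj2 gi2"
    using win2 \<delta> by simp
  have "{t1..t1 + \<delta>} \<inter> {t2..<t2 + \<delta>} = {}"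
    using \<delta>(4) by auto
  then have w1: "exchange_window s (exchange j i t2 (t2 + \<delta>) A2 C2 \<phi>) i j t1 (t1 + \<delta>) A1 C1 gi1 gj1"
    using win1 \<delta> by (intro exchange_window_exchange) simp_all
  define \<psi> where "\<psi> = exchange i j t1 (t1 + \<delta>) A1 C1 (exchange j i t2 (t2 + \<delta>) A2 C2 \<phi>)"
  have adm1: "admissible B s (exchange j i t2 (t2 + \<delta>) A2 C2 \<phi>)"
    using \<open>i \<noteq> j\<close> by (intro admissible_exchange[OF adm _ w2]) simp
  show thesis
  proof (rule that)
    show "admissible B s \<psi>"
      unfolding \<psi>_def by (rule admissible_exchange[OF adm1 \<open>i \<noteq> j\<close> w1])
    have "service s \<phi> i 0 \<tau>i + \<delta> * (gi1 + gi2) \<le> service s \<psi> i 0 \<tau>i"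
      using service_exchange(2)[OF adm _ w2, of \<tau>i] service_exchange(1)[OF adm1 \<open>i \<noteq> j\<close> w1, of \<tau>i] \<delta> \<open>i \<noteq> j\<close>
      by (simp add: \<psi>_def distrib_left)
    moreover have "0 < \<delta> * (gi1 + gi2)"
      using \<delta>(1) gains(1) by simp
    ultimately show "service s \<phi> i 0 \<tau>i < service s \<psi> i 0 \<tau>i"
      by linarith
    have "service s \<phi> j 0 \<tau>j + \<delta> * (gj1 + gj2) \<le> service s \<psi> j 0 \<tau>j"
      using service_exchange(1)[OF adm _ w2, of \<tau>j] service_exchange(2)[OF adm1 \<open>i \<noteq> j\<close> w1, of \<tau>j] \<delta> \<open>i \<noteq> j\<close>
      by (simp add: \<psi>_def distrib_left)
    moreover have "0 \<le> \<delta> * (gj1 + gj2)"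
      using \<delta>(1) gains(2) by simp
    ultimately show "service s \<phi> j 0 \<tau>j \<le> service s \<psi> j 0 \<tau>j"
      by linarith
    show "service s \<psi> k 0 \<tau> = service s \<phi> k 0 \<tau>" if "k \<noteq> i" "k \<noteq> j" for k \<tau>
      using that by (simp add: \<psi>_def exchange_def service_def)
  qed
qed

lemma speedup_exchange_increments:
  assumes speedup: "speedup_ok s ds" and "0 < t1" "0 < t2"
    and pos: "0 < a1" "0 < b1" "0 < a2" "0 < b2"
    and less: "ds i a2 t2 / ds j b2 t2 < ds i a1 t1 / ds j b1 t1"
  obtains \<gamma> \<Delta>1 \<Delta>2 where "0 < \<gamma>" "0 < \<Delta>1" "0 < \<Delta>2" "0 \<le> b1 - 3 * \<gamma> - \<Delta>1" "0 \<le> a2 - 3 * \<gamma> - \<Delta>2"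
    "s i (a2 + \<gamma>) t2 - s i (a2 - 3 * \<gamma> - \<Delta>2) t2 < s i (a1 + \<gamma> + \<Delta>1) t1 - s i (a1 + \<gamma>) t1"
    "s j (b1 + \<gamma>) t1 - s j (b1 - 3 * \<gamma> - \<Delta>1) t1 < s j (b2 + \<gamma> + \<Delta>2) t2 - s j (b2 + \<gamma>) t2"
proof -
  have ds_pos: "0 < ds k \<theta> t" if "0 < t" "0 < \<theta>" for k \<theta> t
    using that by (intro speedup_deriv_pos[OF speedup]) auto
  have deriv: "((\<lambda>y. s k y t) has_real_derivative ds k \<theta> t) (at \<theta>)" if "0 < t" "0 < \<theta>" for k \<theta> t
    using that by (intro speedup_has_derivative_at[OF speedup]) auto
  have "ds i a2 t2 * ds j b1 t1 < ds i a1 t1 * ds j b2 t2"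
    using less ds_pos[of t1 b1 j] ds_pos[of t2 b2 j] pos \<open>0 < t1\<close> \<open>0 < t2\<close> by (simp add: field_simps)
  then show thesis
    using exchange_increments[OF deriv[OF \<open>0 < t1\<close> pos(1)] deriv[OF \<open>0 < t2\<close> pos(3)]
        deriv[OF \<open>0 < t1\<close> pos(2)] deriv[OF \<open>0 < t2\<close> pos(4)] pos(3,2)
        ds_pos[OF \<open>0 < t2\<close> pos(3)] ds_pos[OF \<open>0 < t1\<close> pos(2)] ds_pos[OF \<open>0 < t2\<close> pos(4)]] that
    by blast
qed

lemma derivative_ratio_gap_imp_improvement:
  fixes th :: "'m::finite \<Rightarrow> real \<Rightarrow> real"
  assumes speedup: "speedup_ok s ds" and adm: "admissible B s th" and "i \<noteq> j" "0 < t1" "0 < t2"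
    and pos: "0 < th i t1" "0 < th j t1" "0 < th i t2" "0 < th j t2"
    and less: "ds i (th i t2) t2 / ds j (th j t2) t2 < ds i (th i t1) t1 / ds j (th j t1) t1"
    and before: "t1 < \<tau>i" "t2 < \<tau>i" "t1 < \<tau>j" "t2 < \<tau>j"
  obtains \<psi> where "admissible B s \<psi>" "service s th i 0 \<tau>i < service s \<psi> i 0 \<tau>i"
    "service s th j 0 \<tau>j \<le> service s \<psi> j 0 \<tau>j"
    "\<And>k \<tau>. k \<noteq> i \<Longrightarrow> k \<noteq> j \<Longrightarrow> service s \<psi> k 0 \<tau> = service s th k 0 \<tau>"
proof -
  obtain \<gamma> \<Delta>1 \<Delta>2 where \<gamma>: "0 < \<gamma>" "0 < \<Delta>1" "0 < \<Delta>2"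
      "0 \<le> th j t1 - 3 * \<gamma> - \<Delta>1" "0 \<le> th i t2 - 3 * \<gamma> - \<Delta>2"
    and inc_i: "s i (th i t2 + \<gamma>) t2 - s i (th i t2 - 3 * \<gamma> - \<Delta>2) t2
      < s i (th i t1 + \<gamma> + \<Delta>1) t1 - s i (th i t1 + \<gamma>) t1"
    and inc_j: "s j (th j t1 + \<gamma>) t1 - s j (th j t1 - 3 * \<gamma> - \<Delta>1) t1
      < s j (th j t2 + \<gamma> + \<Delta>2) t2 - s j (th j t2 + \<gamma>) t2"
    by (rule speedup_exchange_increments[OF speedup \<open>0 < t1\<close> \<open>0 < t2\<close> pos less])
  define A1 where "A1 = th i t1 + \<gamma> + \<Delta>1"
  define C1 where "C1 = th j t1 - 3 * \<gamma> - \<Delta>1"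
  define A2 where "A2 = th j t2 + \<gamma> + \<Delta>2"
  define C2 where "C2 = th i t2 - 3 * \<gamma> - \<Delta>2"
  note inc_i = inc_i[folded A1_def C2_def] and inc_j = inc_j[folded A2_def C1_def]
  define \<kappa> where "\<kappa> = min (s i A1 t1 - s i (th i t1 + \<gamma>) t1 - (s i (th i t2 + \<gamma>) t2 - s i C2 t2))
    (s j A2 t2 - s j (th j t2 + \<gamma>) t2 - (s j (th j t1 + \<gamma>) t1 - s j C1 t1)) / 8"
  have "0 < \<kappa>"
    using inc_i inc_j by (simp add: \<kappa>_def)
  txt \<open>Each pair of new levels sums to the current joint allocation minus \<open>2 \<gamma>\<close>, so it fits as
    long as both allocations stay within \<open>\<gamma>\<close> of their values at \<open>t1\<close> resp. \<open>t2\<close>.\<close>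
  obtain e1 where "t1 < e1" and win1: "\<And>d. t1 \<le> d \<Longrightarrow> d < e1 \<Longrightarrow> exchange_window s th i j t1 d A1 C1
      (s i A1 t1 - s i (th i t1 + \<gamma>) t1 - 2 * \<kappa>) (s j C1 t1 - s j (th j t1 + \<gamma>) t1 - 2 * \<kappa>)"
    by (rule exchange_window_exists[where i=i and j=j and vi=A1 and vj=C1,
          OF speedup adm less_imp_le[OF \<open>0 < t1\<close>] \<open>0 < \<gamma>\<close> \<open>0 < \<kappa>\<close>])
      (use pos(1) \<gamma> in \<open>auto simp: A1_def C1_def\<close>)
  obtain e2 where "t2 < e2" and win2: "\<And>d. t2 \<le> d \<Longrightarrow> d < e2 \<Longrightarrow> exchange_window s th j i t2 d A2 C2
      (s j A2 t2 - s j (th j t2 + \<gamma>) t2 - 2 * \<kappa>) (s i C2 t2 - s i (th i t2 + \<gamma>) t2 - 2 * \<kappa>)"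
    by (rule exchange_window_exists[where i=j and j=i and vi=A2 and vj=C2,
          OF speedup adm less_imp_le[OF \<open>0 < t2\<close>] \<open>0 < \<gamma>\<close> \<open>0 < \<kappa>\<close>])
      (use pos(4) \<gamma> in \<open>auto simp: A2_def C2_def\<close>)
  have "t1 \<noteq> t2"
    using less by auto
  moreover have "0 < (s i A1 t1 - s i (th i t1 + \<gamma>) t1 - 2 * \<kappa>) + (s i C2 t2 - s i (th i t2 + \<gamma>) t2 - 2 * \<kappa>)"
    "0 \<le> (s j C1 t1 - s j (th j t1 + \<gamma>) t1 - 2 * \<kappa>) + (s j A2 t2 - s j (th j t2 + \<gamma>) t2 - 2 * \<kappa>)"
    using inc_i inc_j by (auto simp: \<kappa>_def)
  ultimately show thesis
    using two_window_exchange[OF adm \<open>i \<noteq> j\<close> _ \<open>t1 < e1\<close> win1 \<open>t2 < e2\<close> win2 _ _ before] that by blast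
qed

lemma optimal_derivative_ratio_le:
  fixes f :: "real^'m::finite \<Rightarrow> real" and th :: "'m \<Rightarrow> real \<Rightarrow> real"
  assumes x_pos: "\<And>k. 0 < x k" and speedup: "speedup_ok s ds"
    and f_mono: "\<And>U i a. a > U $ i \<Longrightarrow> f U < f (\<chi> k. if k = i then a else U $ k)"
    and opt: "optimal f B s x th T" and "i \<noteq> j" and "0 < t1" "0 < t2"
    and pos: "0 < th i t1" "0 < th j t1" "0 < th i t2" "0 < th j t2"
  shows "ds i (th i t1) t1 / ds j (th j t1) t1 \<le> ds i (th i t2) t2 / ds j (th j t2) t2"
proof (rule ccontr)
  assume "\<not> ?thesis"
  then have less: "ds i (th i t2) t2 / ds j (th j t2) t2 < ds i (th i t1) t1 / ds j (th j t1) t1"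
    by simp
  have feas: "feasible B s x th T"
    using opt by (simp add: optimal_def)
  then have served: "\<And>k. service s th k 0 (T $ k) = x k" and adm: "admissible B s th"
    by (simp_all add: feasible_iff_admissible)
  have before: "t1 < T $ i" "t2 < T $ i" "t1 < T $ j" "t2 < T $ j"
    using feasible_active_before_completion[OF feas] pos \<open>0 < t1\<close> \<open>0 < t2\<close> by auto
  obtain \<psi> where adm_\<psi>: "admissible B s \<psi>"
    and gain: "service s th i 0 (T $ i) < service s \<psi> i 0 (T $ i)"
    and no_loss: "service s th j 0 (T $ j) \<le> service s \<psi> j 0 (T $ j)"
    and others: "\<And>k \<tau>. k \<noteq> i \<Longrightarrow> k \<noteq> j \<Longrightarrow> service s \<psi> k 0 \<tau> = service s th k 0 \<tau>"
    using derivative_ratio_gap_imp_improvement[OF speedup adm \<open>i \<noteq> j\<close> \<open>0 < t1\<close> \<open>0 < t2\<close> pos less before]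
    by blast
  have "x k \<le> service s \<psi> k 0 (T $ k)" for k
    using gain no_loss others[of k] served[of k] by (cases "k = i \<or> k = j") auto
  with f_mono speedup_zero[OF speedup] x_pos opt adm_\<psi> have "service s \<psi> i 0 (T $ i) \<le> x i"
    by (rule optimal_imp_no_overservice)
  then show False
    using gain served[of i] by simp
qed

theorem mainTheorem11:
  fixes f :: "real^'m::finite \<Rightarrow> real"
    and B :: "real \<Rightarrow> real"
    and s ds :: "'m \<Rightarrow> real \<Rightarrow> real \<Rightarrow> real"
    and x :: "'m \<Rightarrow> real"
    and th :: "'m \<Rightarrow> real \<Rightarrow> real"
    and T :: "real^'m"
  assumes x_pos: "\<And>i. x i > 0"
    and B_pos: "\<And>t. t \<ge> 0 \<Longrightarrow> B t > 0"
    and B_rc: "\<And>t. t \<ge> 0 \<Longrightarrow> continuous (at_right t) B"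
    and speedup: "speedup_ok s ds"
    and f_cont: "continuous_on UNIV f"
    and f_mono: "\<And>U i a. a > U $ i \<Longrightarrow> f U < f (\<chi> k. if k = i then a else U $ k)"
    and opt: "optimal f B s x th T"
  shows "\<forall>i j. \<exists>c. \<forall>t>0. th i t > 0 \<and> th j t > 0 \<longrightarrow>
           ds i (th i t) t / ds j (th j t) t = c"
proof (intro allI)
  fix i j
  show "\<exists>c. \<forall>t>0. th i t > 0 \<and> th j t > 0 \<longrightarrow> ds i (th i t) t / ds j (th j t) t = c"
  proof (cases "i = j")
    case True
    have "ds i (th i t) t \<noteq> 0" if "0 < t" "0 < th i t" for t
      using that speedup_deriv_pos[OF speedup, of t "th i t" i] by simp
    then show ?thesis
      using True by (intro exI[of _ 1]) auto
  next
    case False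
    note ratio_le = optimal_derivative_ratio_le[OF x_pos speedup f_mono opt False]
    show ?thesis
    proof (cases "\<exists>t0>0. 0 < th i t0 \<and> 0 < th j t0")
      case True
      then obtain t0 where "0 < t0" "0 < th i t0" "0 < th j t0"
        by blast
      then show ?thesis
        by (intro exI[of _ "ds i (th i t0) t0 / ds j (th j t0) t0"] allI impI antisym ratio_le) auto
    qed auto
  qed
qed

end
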